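(* Every welded knot diagram can be transformed into a diagram of the trivial knot by a finite sequence of diagonal moves (together with classical and welded Reidemeister moves).
   Context: A welded knot diagram is a knot diagram that may have welded (virtual) crossings as well as classical crossings; welded knots are equivalence classes of welded knot diagrams under the three classical Reidemeister moves and the welded Reidemeister moves (the virtual Reidemeister moves together with the over-forbidden-type move allowing a strand passing over to slide past a welded crossing). A diagonal move (D-move) is a local move on a diagram defined as follows. Consider a disk in which the diagram consists of four arcs $a,b,c,d$ arranged in a "$\#$" pattern: $a$ and $c$ do not meet each other, $b$ and $d$ do not meet each other, and each of $a,c$ crosses each of $b,d$ exactly once in a classical crossing, giving four crossings labelled $1,2,3,4$ in cyclic order around the central square. The pairs $\{1,3\}$ and $\{2,4\}$ are the diagonal crossing pairs. A diagonal move changes the over/under information at both crossings of one diagonal pair and leaves the rest of the diagram unchanged; it is allowed for every choice of orientations of the arcs. *)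

theory Defs
  imports Main
begin

text \<open>
A welded (or virtual) knot diagram is encoded by its Gauss word: the cyclic
sequence of classical crossings met when travelling once along the oriented
knot.  Each letter records the crossing label, whether the strand passes over
(True) or under (False) at that point, and the sign of the crossing
(True = positive).  Welded crossings are invisible in the Gauss word; the
virtual Reidemeister moves are therefore built in.  The cyclic nature is
modelled by the rotation move; renaming crossings by the relabelling move.
\<close>

datatype letter = Ltr (lbl: nat) (ovr: bool) (pos: bool)

definition gauss_word :: "letter list \<Rightarrow> bool" where
  "gauss_word w \<longleftrightarrow> distinct w
     \<and> (\<forall>c s. Ltr c True s \<in> set w \<longleftrightarrow> Ltr c False s \<in> set w)
     \<and> (\<forall>c s t. Ltr c True s \<in> set w \<longrightarrow> Ltr c True t \<in> set w \<longrightarrow> s = t)"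

definition labels :: "letter list \<Rightarrow> nat set" where
  "labels w = lbl ` set w"

fun interleave :: "'a list list \<Rightarrow> 'a list list \<Rightarrow> 'a list" where
  "interleave [] ss = concat ss"
| "interleave (g # gs) [] = g @ concat gs"
| "interleave (g # gs) (s # ss) = g @ s @ interleave gs ss"

text \<open>Local replacement: the word w contains the segments olds (in some order,
pairwise disjoint, separated by arbitrary gaps), and w' arises by replacing each
old segment by the corresponding new one.\<close>
definition replace_segs :: "'a list list \<Rightarrow> 'a list list \<Rightarrow> 'a list \<Rightarrow> 'a list \<Rightarrow> bool" where
  "replace_segs olds news w w' \<longleftrightarrow> length news = length olds \<and>
     (\<exists>gs \<pi>. length gs = Suc (length olds) \<and> distinct \<pi> \<and> set \<pi> = {..<length olds}
        \<and> w = interleave gs (map ((!) olds) \<pi>) \<and> w' = interleave gs (map ((!) news) \<pi>))"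

definition sgn_of :: "bool \<Rightarrow> int" where
  "sgn_of b = (if b then 1 else -1)"

definition ord2 :: "bool \<Rightarrow> 'a \<Rightarrow> 'a \<Rightarrow> 'a list" where
  "ord2 e x y = (if e then [x, y] else [y, x])"

text \<open>Crossing sign = orient * det(over direction, under direction).\<close>
definition sprod3 :: "bool \<Rightarrow> bool \<Rightarrow> bool \<Rightarrow> bool" where
  "sprod3 orient x y \<longleftrightarrow> sgn_of orient * sgn_of x * sgn_of y = 1"

definition sprod4 :: "bool \<Rightarrow> bool \<Rightarrow> bool \<Rightarrow> bool \<Rightarrow> bool" where
  "sprod4 orient x y z \<longleftrightarrow> sgn_of orient * sgn_of x * sgn_of y * sgn_of z = 1"

definition r1_move :: "letter list \<Rightarrow> letter list \<Rightarrow> bool" where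
  "r1_move w w' \<longleftrightarrow> (\<exists>c s. c \<notin> labels w \<and>
     (replace_segs [[]] [[Ltr c True s, Ltr c False s]] w w'
      \<or> replace_segs [[]] [[Ltr c False s, Ltr c True s]] w w'))"

definition r2_move :: "letter list \<Rightarrow> letter list \<Rightarrow> bool" where
  "r2_move w w' \<longleftrightarrow> (\<exists>c d s. c \<noteq> d \<and> c \<notin> labels w \<and> d \<notin> labels w \<and>
     (replace_segs [[], []] [[Ltr c True s, Ltr d True (\<not> s)], [Ltr c False s, Ltr d False (\<not> s)]] w w'
      \<or> replace_segs [[], []] [[Ltr c True s, Ltr d True (\<not> s)], [Ltr d False (\<not> s), Ltr c False s]] w w'))"

text \<open>R3: top strand T, middle M, bottom B; a = T/M, b = T/B, c = M/B.
eT: a before b on T; eM: a before c on M; eB: b before c on B;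
orient: orientation of the triangle a b c.\<close>
definition r3_segs :: "nat \<Rightarrow> nat \<Rightarrow> nat \<Rightarrow> bool \<Rightarrow> bool \<Rightarrow> bool \<Rightarrow> bool \<Rightarrow> letter list list" where
  "r3_segs a b c orient eT eM eB =
    (let sa = sprod3 orient eT eM; sb = sprod3 orient eT eB; sc = sprod3 orient eM eB in
     [ord2 eT (Ltr a True sa) (Ltr b True sb),
      ord2 eM (Ltr a False sa) (Ltr c True sc),
      ord2 eB (Ltr b False sb) (Ltr c False sc)])"

definition r3_move :: "letter list \<Rightarrow> letter list \<Rightarrow> bool" where
  "r3_move w w' \<longleftrightarrow> (\<exists>a b c orient eT eM eB. distinct [a, b, c] \<and>
     replace_segs (r3_segs a b c orient eT eM eB) (r3_segs a b c orient (\<not> eT) (\<not> eM) (\<not> eB)) w w')"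

definition oc_move :: "letter list \<Rightarrow> letter list \<Rightarrow> bool" where
  "oc_move w w' \<longleftrightarrow> (\<exists>x y c s d t. w = x @ [Ltr c True s, Ltr d True t] @ y
                                   \<and> w' = x @ [Ltr d True t, Ltr c True s] @ y)"

definition rot_move :: "letter list \<Rightarrow> letter list \<Rightarrow> bool" where
  "rot_move w w' \<longleftrightarrow> w' = rotate1 w"

definition relabel_move :: "letter list \<Rightarrow> letter list \<Rightarrow> bool" where
  "relabel_move w w' \<longleftrightarrow> (\<exists>f. inj_on f (labels w) \<and>
     w' = map (\<lambda>l. Ltr (f (lbl l)) (ovr l) (pos l)) w)"

definition welded_step :: "letter list \<Rightarrow> letter list \<Rightarrow> bool" where
  "welded_step w w' \<longleftrightarrow> gauss_word w \<and> gauss_word w' \<and>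
     (r1_move w w' \<or> r2_move w w' \<or> r3_move w w' \<or> oc_move w w' \<or> rot_move w w' \<or> relabel_move w w')"

text \<open>The '#' tangle: horizontal arcs a (bottom, y=0) and c (top, y=1),
vertical arcs b (right, x=1) and d (left, x=0); crossings 1 = a/b at (1,0),
2 = c/b at (1,1), 3 = c/d at (0,1), 4 = a/d at (0,0), cyclic around the square.
ea, ec: horizontal arc oriented in +x; eb, ed: vertical arc oriented in +y.
hk: at crossing k the horizontal arc is the over strand.
orient: global orientation of the disk (sign convention).\<close>
definition hash_segs :: "nat \<Rightarrow> nat \<Rightarrow> nat \<Rightarrow> nat \<Rightarrow> bool \<Rightarrow> bool \<Rightarrow> bool \<Rightarrow> bool \<Rightarrow> bool
                         \<Rightarrow> bool \<Rightarrow> bool \<Rightarrow> bool \<Rightarrow> bool \<Rightarrow> letter list list" where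
  "hash_segs n1 n2 n3 n4 orient ea eb ec ed h1 h2 h3 h4 =
    (let s1 = sprod4 orient ea eb h1; s2 = sprod4 orient ec eb h2;
         s3 = sprod4 orient ec ed h3; s4 = sprod4 orient ea ed h4 in
     [ord2 ea (Ltr n4 h4 s4) (Ltr n1 h1 s1),
      ord2 eb (Ltr n1 (\<not> h1) s1) (Ltr n2 (\<not> h2) s2),
      ord2 ec (Ltr n3 h3 s3) (Ltr n2 h2 s2),
      ord2 ed (Ltr n4 (\<not> h4) s4) (Ltr n3 (\<not> h3) s3)])"

definition d_move :: "letter list \<Rightarrow> letter list \<Rightarrow> bool" where
  "d_move w w' \<longleftrightarrow> gauss_word w \<and> gauss_word w' \<and>
    (\<exists>n1 n2 n3 n4 orient ea eb ec ed h1 h2 h3 h4. distinct [n1, n2, n3, n4] \<and>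
      (replace_segs (hash_segs n1 n2 n3 n4 orient ea eb ec ed h1 h2 h3 h4)
                    (hash_segs n1 n2 n3 n4 orient ea eb ec ed (\<not> h1) h2 (\<not> h3) h4) w w'
     \<or> replace_segs (hash_segs n1 n2 n3 n4 orient ea eb ec ed h1 h2 h3 h4)
                    (hash_segs n1 n2 n3 n4 orient ea eb ec ed h1 (\<not> h2) h3 (\<not> h4)) w w'))"

definition wd_step :: "letter list \<Rightarrow> letter list \<Rightarrow> bool" where
  "wd_step u v \<longleftrightarrow> welded_step u v \<or> welded_step v u \<or> d_move u v \<or> d_move v u"

end

theory Submission
  imports Defs
begin

(* A diagonal move whose diagonal pair consists of a crossing c and a kink changes the crossing c,
   because a kink can be removed by R1 whatever its over/under information.  Two Reidemeister II
   bigons and a kink placed around the two letters of c produce such a # tangle, so every crossing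
   change is a composite of the allowed moves.  Now take an innermost chord X ... Y of the Gauss
   word, i.e. one with no crossing occurring twice strictly between X and Y.  After crossing
   changes, X and all letters between X and Y are over-crossings; the welded move slides X past
   them until it meets Y, and the resulting kink is removed by R1.  Induction on the length of the
   Gauss word ends at the trivial diagram. *)

lemma split_list_twice:
  assumes "a \<in> set w" "b \<in> set w" "a \<noteq> b"
  shows "\<exists>u v x. w = u @ a # v @ b # x \<or> w = u @ b # v @ a # x"
proof -
  obtain p q where w: "w = p @ a # q" using split_list[OF assms(1)] by blast
  then have "b \<in> set p \<or> b \<in> set q" using assms(2,3) by auto
  then show ?thesis
  proof
    assume "b \<in> set p"
    then obtain u v where "p = u @ b # v" using split_list by metis
    then show ?thesis using w by auto
  next
    assume "b \<in> set q"
    then obtain v x where "q = v @ b # x" using split_list by metis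
    then show ?thesis using w by auto
  qed
qed

lemma chord_of_not_distinct:
  "\<not> distinct (map f w) \<Longrightarrow> \<exists>u X z Y x. w = u @ X # z @ Y # x \<and> f X = f Y"
proof (induction w)
  case Nil
  then show ?case by simp
next
  case (Cons a w)
  show ?case
  proof (cases "distinct (map f w)")
    case True
    with Cons.prems obtain Y where "Y \<in> set w" "f a = f Y" by auto
    then obtain z x where "w = z @ Y # x" by (metis split_list)
    with \<open>f a = f Y\<close> show ?thesis by (metis append_Nil)
  next
    case False
    then obtain u X z Y x where "w = u @ X # z @ Y # x" "f X = f Y" using Cons.IH by blast
    then show ?thesis by (metis append_Cons)
  qed
qed

lemma innermost_chord:
  "\<not> distinct (map f w)
     \<Longrightarrow> \<exists>u X z Y x. w = u @ X # z @ Y # x \<and> f X = f Y \<and> distinct (map f z)"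
proof (induction "length w" arbitrary: w rule: less_induct)
  case less
  obtain u X z Y x where w: "w = u @ X # z @ Y # x" and "f X = f Y"
    using chord_of_not_distinct[OF less.prems] by blast
  show ?case
  proof (cases "distinct (map f z)")
    case True
    with w \<open>f X = f Y\<close> show ?thesis by blast
  next
    case False
    moreover have "length z < length w" using w by simp
    ultimately obtain u' X' z' Y' x'
      where "z = u' @ X' # z' @ Y' # x'" "f X' = f Y'" "distinct (map f z')"
      using less.hyps by blast
    then show ?thesis using w by (metis append.assoc append_Cons)
  qed
qed

lemma labels_simps [simp]:
  "labels [] = {}"
  "labels (l # w) = insert (lbl l) (labels w)"
  "labels (w @ w') = labels w \<union> labels w'"
  by (auto simp: labels_def)

definition gauss_letters :: "letter set \<Rightarrow> bool" where
  "gauss_letters S \<longleftrightarrow> (\<forall>c s. Ltr c True s \<in> S \<longleftrightarrow> Ltr c False s \<in> S)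
     \<and> (\<forall>c s t. Ltr c True s \<in> S \<longrightarrow> Ltr c True t \<in> S \<longrightarrow> s = t)"

lemma gauss_word_iff: "gauss_word w \<longleftrightarrow> distinct w \<and> gauss_letters (set w)"
  unfolding gauss_word_def gauss_letters_def by simp

lemma gauss_letters_insert_pair:
  "gauss_letters S \<Longrightarrow> c \<notin> lbl ` S
     \<Longrightarrow> gauss_letters (insert (Ltr c b s) (insert (Ltr c (\<not> b) s) S))"
  unfolding gauss_letters_def by (cases b) (auto simp: image_iff)

lemma gauss_letters_remove_label:
  "gauss_letters S \<Longrightarrow> gauss_letters (S - {l. lbl l = c})"
  unfolding gauss_letters_def by simp blast

lemma gauss_word_partner:
  "gauss_word w \<Longrightarrow> Ltr c b s \<in> set w \<Longrightarrow> Ltr c (\<not> b) s \<in> set w"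
  unfolding gauss_word_def by (cases b) auto

lemma gauss_word_letter_eq:
  assumes "gauss_word w" "l \<in> set w" "l' \<in> set w" "lbl l = lbl l'" "ovr l = ovr l'"
  shows "l = l'"
proof -
  obtain c b s t where l: "l = Ltr c b s" and l': "l' = Ltr c b t"
    using assms(4,5) by (cases l; cases l') auto
  have "Ltr c True s \<in> set w" "Ltr c True t \<in> set w"
    using assms(2,3) gauss_word_partner[OF assms(1)] l l' by (cases b; force)+
  then show ?thesis using assms(1) l l' unfolding gauss_word_def by blast
qed

lemma gauss_word_chord_iff:
  "gauss_word (p @ Ltr c b s # q @ Ltr c (\<not> b) s # r)
     \<longleftrightarrow> gauss_word (p @ q @ r) \<and> c \<notin> labels (p @ q @ r)"
  (is "gauss_word ?w \<longleftrightarrow> gauss_word ?w' \<and> _")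
proof -
  have set_w: "set ?w = insert (Ltr c b s) (insert (Ltr c (\<not> b) s) (set ?w'))" by auto
  have fresh: "c \<notin> labels ?w'" if gw: "gauss_word ?w"
  proof
    assume "c \<in> labels ?w'"
    then obtain l where l: "l \<in> set ?w'" "lbl l = c" unfolding labels_def by blast
    have "Ltr c b s \<notin> set ?w'" "Ltr c (\<not> b) s \<notin> set ?w'"
      using gw unfolding gauss_word_def by auto
    moreover have "l = Ltr c b s \<or> l = Ltr c (\<not> b) s"
      using gauss_word_letter_eq[OF gw, of l] l set_w by (cases "ovr l = b") auto
    ultimately show False using l(1) by blast
  qed
  show ?thesis
  proof
    assume gw: "gauss_word ?w"
    then have "set ?w' = set ?w - {l. lbl l = c}"
      using fresh set_w unfolding labels_def by auto
    then have "gauss_letters (set ?w')"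
      using gw gauss_letters_remove_label unfolding gauss_word_iff by metis
    moreover have "distinct ?w'" using gw unfolding gauss_word_def by auto
    ultimately show "gauss_word ?w' \<and> c \<notin> labels ?w'"
      using gw fresh by (simp add: gauss_word_iff)
  next
    assume gw': "gauss_word ?w' \<and> c \<notin> labels ?w'"
    then have "Ltr c a t \<notin> set ?w'" for a t unfolding labels_def by force
    then have "distinct ?w" using gw' unfolding gauss_word_def by auto
    moreover have "gauss_letters (set ?w)"
      using gauss_letters_insert_pair[of "set ?w'" c b s] gw' set_w
      by (simp add: gauss_word_iff labels_def)
    ultimately show "gauss_word ?w" by (simp add: gauss_word_iff)
  qed
qed

lemma gauss_word_chordE:
  assumes gw: "gauss_word (u @ X # v @ Y # x)" and "lbl X = lbl Y"
  obtains c b s where "X = Ltr c b s" "Y = Ltr c (\<not> b) s"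
proof -
  obtain c b s where X: "X = Ltr c b s" by (metis letter.collapse)
  have "X \<noteq> Y" using gw unfolding gauss_word_def by auto
  moreover have "X \<in> set (u @ X # v @ Y # x)" "Y \<in> set (u @ X # v @ Y # x)" by simp_all
  ultimately have "ovr Y \<noteq> b"
    using gauss_word_letter_eq[OF gw] \<open>lbl X = lbl Y\<close> X by (metis letter.sel(2))
  moreover have "Ltr c (\<not> b) s \<in> set (u @ X # v @ Y # x)"
    using gauss_word_partner[OF gw, of c b s] X by simp
  ultimately have "Y = Ltr c (\<not> b) s"
    using gauss_word_letter_eq[OF gw, of Y "Ltr c (\<not> b) s"] \<open>lbl X = lbl Y\<close> X by simp
  with X show ?thesis by (rule that)
qed

lemma gauss_word_not_distinct_labels:
  assumes "gauss_word w" "w \<noteq> []"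
  shows "\<not> distinct (map lbl w)"
proof -
  obtain c b s w' where w: "w = Ltr c b s # w'" using assms(2) by (metis letter.collapse neq_Nil_conv)
  have "Ltr c (\<not> b) s \<in> set w" using gauss_word_partner[OF assms(1), of c b s] w by simp
  moreover have "Ltr c b s \<in> set w" using w by simp
  ultimately have "\<not> inj_on lbl (set w)"
    by (metis inj_onD letter.inject letter.sel(1))
  then show ?thesis by (simp add: distinct_map)
qed

lemma symp_wd_step: "symp wd_step"
  unfolding symp_def wd_step_def by blast

lemma wd_steps_sym: "wd_step\<^sup>*\<^sup>* u v \<Longrightarrow> wd_step\<^sup>*\<^sup>* v u"
  using symp_rtranclp[OF symp_wd_step] by (rule sympD)

lemma wd_step_gauss_word: "wd_step u v \<Longrightarrow> gauss_word v"
  by (auto simp: wd_step_def welded_step_def d_move_def)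

lemma wd_steps_gauss_word: "wd_step\<^sup>*\<^sup>* u v \<Longrightarrow> gauss_word u \<Longrightarrow> gauss_word v"
  by (induction rule: rtranclp_induct) (auto intro: wd_step_gauss_word)

lemma replace_segs_interleave:
  "length news = length olds \<Longrightarrow> length gs = Suc (length olds)
     \<Longrightarrow> replace_segs olds news (interleave gs olds) (interleave gs news)"
  unfolding replace_segs_def
  by (rule conjI, simp, rule exI[of _ gs], rule exI[of _ "[0..<length olds]"])
    (simp add: atLeast0LessThan, metis map_nth)

lemma wd_step_r1:
  assumes "gauss_word (p @ q)" "c \<notin> labels (p @ q)"
  shows "wd_step (p @ q) (p @ Ltr c b s # Ltr c (\<not> b) s # q)"
proof -
  have "gauss_word (p @ Ltr c b s # Ltr c (\<not> b) s # q)"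
    using assms gauss_word_chord_iff[of p c b s "[]" q] by simp
  moreover have "r1_move (p @ q) (p @ Ltr c b s # Ltr c (\<not> b) s # q)"
    using assms(2) replace_segs_interleave[of "[[Ltr c b s, Ltr c (\<not> b) s]]" "[[]]" "[p, q]"]
    unfolding r1_move_def by (cases b) auto
  ultimately show ?thesis using assms(1) by (simp add: wd_step_def welded_step_def)
qed

lemma wd_step_r2:
  assumes "gauss_word (p @ q @ r)" "c \<noteq> d" "c \<notin> labels (p @ q @ r)" "d \<notin> labels (p @ q @ r)"
    and "C = [Ltr c False s, Ltr d False (\<not> s)] \<or> C = [Ltr d False (\<not> s), Ltr c False s]"
  shows "wd_step (p @ q @ r) (p @ Ltr c True s # Ltr d True (\<not> s) # q @ C @ r)"
proof -
  have "gauss_word (p @ Ltr d True (\<not> s) # q @ Ltr d False (\<not> s) # r)"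
    using assms(1,4) gauss_word_chord_iff[of p d True "\<not> s" q r] by simp
  then have
    "gauss_word (p @ Ltr c True s # Ltr d True (\<not> s) # q @ Ltr c False s # Ltr d False (\<not> s) # r)"
    "gauss_word (p @ Ltr c True s # Ltr d True (\<not> s) # q @ Ltr d False (\<not> s) # Ltr c False s # r)"
    using assms(2,3)
      gauss_word_chord_iff[of p c True s "Ltr d True (\<not> s) # q" "Ltr d False (\<not> s) # r"]
      gauss_word_chord_iff[of p c True s "Ltr d True (\<not> s) # q @ [Ltr d False (\<not> s)]" r]
    by simp_all
  then have "gauss_word (p @ Ltr c True s # Ltr d True (\<not> s) # q @ C @ r)"
    using assms(5) by auto
  moreover have "r2_move (p @ q @ r) (p @ Ltr c True s # Ltr d True (\<not> s) # q @ C @ r)"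
    using assms(2-5)
      replace_segs_interleave[of "[[Ltr c True s, Ltr d True (\<not> s)], C]" "[[], []]" "[p, q, r]"]
    unfolding r2_move_def by auto
  ultimately show ?thesis using assms(1) by (simp add: wd_step_def welded_step_def)
qed

lemma wd_steps_slide_over:
  assumes "gauss_word (p @ t # z @ q)" "ovr t" "\<forall>l\<in>set z. ovr l"
  shows "wd_step\<^sup>*\<^sup>* (p @ t # z @ q) (p @ z @ t # q)"
  using assms
proof (induction z arbitrary: p)
  case Nil
  then show ?case by simp
next
  case (Cons y z)
  have gw: "gauss_word ((p @ [y]) @ t # z @ q)"
    using Cons.prems(1) unfolding gauss_word_def by auto
  have "oc_move (p @ t # y # z @ q) ((p @ [y]) @ t # z @ q)"
    using Cons.prems(2,3) unfolding oc_move_def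
    by (intro exI[of _ p] exI[of _ "z @ q"]) (cases t; cases y; simp)
  then have "wd_step (p @ t # (y # z) @ q) ((p @ [y]) @ t # z @ q)"
    using Cons.prems(1) gw by (simp add: wd_step_def welded_step_def)
  moreover have "wd_step\<^sup>*\<^sup>* ((p @ [y]) @ t # z @ q) ((p @ [y]) @ z @ t # q)"
    using Cons.IH[OF gw Cons.prems(2)] Cons.prems(3) by simp
  ultimately show ?case by (simp add: converse_rtranclp_into_rtranclp)
qed

definition flip_crossings :: "nat set \<Rightarrow> letter \<Rightarrow> letter" where
  "flip_crossings L l = (if lbl l \<in> L then Ltr (lbl l) (\<not> ovr l) (\<not> pos l) else l)"

lemma flip_crossings_flip_crossings [simp]: "flip_crossings L (flip_crossings L l) = l"
  by (cases l) (simp add: flip_crossings_def)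

lemma lbl_flip_crossings [simp]: "lbl (flip_crossings L l) = lbl l"
  by (simp add: flip_crossings_def)

lemma ovr_flip_crossings: "ovr (flip_crossings L l) \<longleftrightarrow> (if lbl l \<in> L then \<not> ovr l else ovr l)"
  by (simp add: flip_crossings_def)

lemma flip_crossings_Ltr:
  "flip_crossings L (Ltr c b s) = (if c \<in> L then Ltr c (\<not> b) (\<not> s) else Ltr c b s)"
  by (simp add: flip_crossings_def)

lemma flip_crossings_insert:
  "c \<notin> L \<Longrightarrow> flip_crossings {c} (flip_crossings L l) = flip_crossings (insert c L) l"
  by (cases l) (auto simp: flip_crossings_def)

lemma map_flip_crossings_id: "\<forall>l\<in>set w. lbl l \<notin> L \<Longrightarrow> map (flip_crossings L) w = w"
  by (induction w) (auto simp: flip_crossings_def)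

lemma gauss_word_map_flip_crossings:
  assumes "gauss_word w"
  shows "gauss_word (map (flip_crossings L) w)"
proof -
  have inj: "inj (flip_crossings L)" by (metis flip_crossings_flip_crossings injI)
  then have "distinct (map (flip_crossings L) w)"
    using assms by (simp add: gauss_word_def distinct_map inj_on_subset[of _ UNIV])
  moreover have "gauss_letters (set (map (flip_crossings L) w))"
  proof -
    have "l \<in> set (map (flip_crossings L) w) \<longleftrightarrow> flip_crossings L l \<in> set w" for l
      using inj_image_mem_iff[OF inj, of "flip_crossings L l" "set w"] by simp
    then have mem: "Ltr c b t \<in> set (map (flip_crossings L) w)
        \<longleftrightarrow> (if c \<in> L then Ltr c (\<not> b) (\<not> t) else Ltr c b t) \<in> set w" for c b t
      by (simp only: flip_crossings_Ltr)
    show ?thesis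
      using assms unfolding gauss_letters_def gauss_word_def mem
      by (intro conjI allI impI; simp split: if_splits; blast)
  qed
  ultimately show ?thesis by (simp add: gauss_word_iff)
qed

lemma ovr_flip_under_crossings:
  assumes "distinct (map lbl w)" "l \<in> set w"
  shows "ovr (flip_crossings (lbl ` {l \<in> set w. \<not> ovr l}) l)"
proof (cases "ovr l")
  case True
  have "l' = l" if "l' \<in> set w" "lbl l' = lbl l" for l'
    using assms that by (auto simp: distinct_map inj_on_def)
  with True have "lbl l \<notin> lbl ` {l \<in> set w. \<not> ovr l}" by auto
  with True show ?thesis by (simp add: ovr_flip_crossings)
next
  case False
  with assms(2) show ?thesis by (simp add: ovr_flip_crossings)
qed

(* Crossings N, N+1 and N+2, N+3 are Reidemeister II bigons and N+4 is a kink, placed around the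
   chord A ... B so that N, lbl A, N+2 and N+4 form a # tangle with diagonal pair {lbl A, N+4}.
   The kink sign b = s makes the diagonal move turn the frame with b into the frame with \<not> b. *)
definition hash_frame ::
  "nat \<Rightarrow> bool \<Rightarrow> bool \<Rightarrow> letter list \<Rightarrow> letter \<Rightarrow> letter list \<Rightarrow> letter \<Rightarrow> letter list
    \<Rightarrow> letter list" where
  "hash_frame N s b u A v B x =
     [Ltr N True s, Ltr (N+4) b (b = s), Ltr (N+4) (\<not> b) (b = s),
      Ltr (N+2) True (\<not> s), Ltr (N+3) True s, Ltr (N+1) True (\<not> s)]
     @ u @ [Ltr (N+1) False (\<not> s), Ltr N False s] @ A # v @ B
     # [Ltr (N+2) False (\<not> s), Ltr (N+3) False s] @ x"

lemma wd_steps_hash_frame: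
  assumes gw: "gauss_word (u @ A # v @ B # x)"
    and bound: "labels (u @ A # v @ B # x) \<subseteq> {..<N}"
  shows "wd_step\<^sup>*\<^sup>* (u @ A # v @ B # x) (hash_frame N s b u A v B x)"
proof -
  have fresh: "m \<notin> labels u" "m \<notin> labels v" "m \<notin> labels x" "m \<noteq> lbl A" "m \<noteq> lbl B"
    if "N \<le> m" for m
    using bound that by auto
  define W1 where "W1 = Ltr N True s # Ltr (N+1) True (\<not> s) # u
    @ [Ltr (N+1) False (\<not> s), Ltr N False s] @ A # v @ B # x"
  define mid where "mid = Ltr (N+1) True (\<not> s) # u @ [Ltr (N+1) False (\<not> s), Ltr N False s] @ A # v @ [B]"
  define W2 where "W2 = [Ltr N True s] @ Ltr (N+2) True (\<not> s) # Ltr (N+3) True s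
    # mid @ [Ltr (N+2) False (\<not> s), Ltr (N+3) False s] @ x"
  have step1: "wd_step (u @ A # v @ B # x) W1"
    using wd_step_r2[of "[]" u "A # v @ B # x" N "N+1" "[Ltr (N+1) False (\<not> s), Ltr N False s]" s]
      gw fresh unfolding W1_def by simp
  then have gw1: "gauss_word W1" by (rule wd_step_gauss_word)
  have step2: "wd_step W1 W2"
    using wd_step_r2[of "[Ltr N True s]" mid x "N+2" "N+3" "[Ltr (N+2) False (\<not> s), Ltr (N+3) False s]" "\<not> s"]
      gw1 fresh unfolding W1_def W2_def mid_def by simp
  then have gw2: "gauss_word W2" by (rule wd_step_gauss_word)
  have step3: "wd_step W2 (hash_frame N s b u A v B x)"
    using wd_step_r1[of "[Ltr N True s]" "drop 1 W2" "N+4" b "b = s"] gw2 fresh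
    unfolding W2_def mid_def hash_frame_def by simp
  show ?thesis using step1 step2 step3 by (meson converse_rtranclp_into_rtranclp r_into_rtranclp)
qed

lemma d_move_hash_frame:
  assumes "gauss_word (hash_frame N (h \<noteq> \<sigma>) True u (Ltr c h \<sigma>) v (Ltr c (\<not> h) \<sigma>) x)"
    and "gauss_word (hash_frame N (h \<noteq> \<sigma>) False u (Ltr c (\<not> h) (\<not> \<sigma>)) v (Ltr c h (\<not> \<sigma>)) x)"
    and "c < N"
  shows "d_move (hash_frame N (h \<noteq> \<sigma>) True u (Ltr c h \<sigma>) v (Ltr c (\<not> h) \<sigma>) x)
                (hash_frame N (h \<noteq> \<sigma>) False u (Ltr c (\<not> h) (\<not> \<sigma>)) v (Ltr c h (\<not> \<sigma>)) x)"
proof -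
  let ?s = "h \<noteq> \<sigma>"
  let ?segs = "hash_segs c (N+2) (N+4) N (h = \<sigma>) True True True True"
  have "replace_segs (?segs h True False False) (?segs (\<not> h) True (\<not> False) False)
          (hash_frame N ?s True u (Ltr c h \<sigma>) v (Ltr c (\<not> h) \<sigma>) x)
          (hash_frame N ?s False u (Ltr c (\<not> h) (\<not> \<sigma>)) v (Ltr c h (\<not> \<sigma>)) x)"
    unfolding replace_segs_def
    by (intro conjI exI[of _ "[3,2,0,1]"]
        exI[of _ "[[], [], Ltr (N+3) True ?s # Ltr (N+1) True (\<not> ?s) # u @ [Ltr (N+1) False (\<not> ?s)],
                   v, Ltr (N+3) False ?s # x]"])
      (auto simp: hash_segs_def hash_frame_def ord2_def sprod4_def sgn_of_def lessThan_Suc)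
  moreover have "distinct [c, N+2, N+4, N]" using assms(3) by simp
  ultimately show ?thesis using assms(1,2) unfolding d_move_def by blast
qed

lemma wd_steps_crossing_change:
  assumes gw: "gauss_word (u @ Ltr c h \<sigma> # v @ Ltr c (\<not> h) \<sigma> # x)"
  shows "wd_step\<^sup>*\<^sup>* (u @ Ltr c h \<sigma> # v @ Ltr c (\<not> h) \<sigma> # x)
                    (u @ Ltr c (\<not> h) (\<not> \<sigma>) # v @ Ltr c h (\<not> \<sigma>) # x)"
    (is "wd_step\<^sup>*\<^sup>* ?w ?w'")
proof -
  have "finite (labels ?w)" by (simp add: labels_def)
  then obtain N where "\<forall>n\<in>labels ?w. n < N" using finite_nat_set_iff_bounded by blast
  then have bound: "labels ?w \<subseteq> {..<N}" by blast
  then have bound': "labels ?w' \<subseteq> {..<N}" by simp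
  have gw': "gauss_word ?w'"
    using gw gauss_word_chord_iff[of u c h \<sigma> v x] gauss_word_chord_iff[of u c "\<not> h" "\<not> \<sigma>" v x]
    by simp
  let ?F = "hash_frame N (h \<noteq> \<sigma>) True u (Ltr c h \<sigma>) v (Ltr c (\<not> h) \<sigma>) x"
  let ?F' = "hash_frame N (h \<noteq> \<sigma>) False u (Ltr c (\<not> h) (\<not> \<sigma>)) v (Ltr c h (\<not> \<sigma>)) x"
  have frame: "wd_step\<^sup>*\<^sup>* ?w ?F" using wd_steps_hash_frame[OF gw bound] .
  have frame': "wd_step\<^sup>*\<^sup>* ?w' ?F'" using wd_steps_hash_frame[OF gw' bound'] .
  have "c < N" using bound by auto
  then have "wd_step ?F ?F'"
    using d_move_hash_frame wd_steps_gauss_word[OF frame gw] wd_steps_gauss_word[OF frame' gw']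
    unfolding wd_step_def by blast
  with frame frame' show ?thesis
    by (meson rtranclp.rtrancl_into_rtrancl rtranclp_trans wd_steps_sym)
qed

lemma wd_steps_flip_crossing:
  assumes gw: "gauss_word w"
  shows "wd_step\<^sup>*\<^sup>* w (map (flip_crossings {c}) w)"
proof (cases "c \<in> labels w")
  case False
  then have "map (flip_crossings {c}) w = w" by (intro map_flip_crossings_id) (auto simp: labels_def)
  then show ?thesis by simp
next
  case True
  then obtain b s where "Ltr c b s \<in> set w" unfolding labels_def by (metis imageE letter.collapse)
  then have mem: "Ltr c True s \<in> set w" "Ltr c False s \<in> set w"
    using gauss_word_partner[OF gw, of c b s] by (cases b; simp)+
  obtain u v x where
    "w = u @ Ltr c True s # v @ Ltr c False s # x \<or> w = u @ Ltr c False s # v @ Ltr c True s # x"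
    using split_list_twice[OF mem] by auto
  then have "\<exists>h. w = u @ Ltr c h s # v @ Ltr c (\<not> h) s # x"
    by (elim disjE) (rule exI[of _ True], simp, rule exI[of _ False], simp)
  then obtain h where w: "w = u @ Ltr c h s # v @ Ltr c (\<not> h) s # x" by blast
  have "\<forall>l\<in>set u \<union> set v \<union> set x. lbl l \<notin> {c}"
    using gw gauss_word_chord_iff[of u c h s v x] unfolding w by (auto simp: labels_def)
  then have "map (flip_crossings {c}) w = u @ Ltr c (\<not> h) (\<not> s) # v @ Ltr c h (\<not> s) # x"
    unfolding w by (simp add: map_flip_crossings_id flip_crossings_Ltr)
  with wd_steps_crossing_change[of u c h s v x] gw show ?thesis unfolding w by simp
qed

lemma wd_steps_flip_crossings:
  assumes "finite L" and gw: "gauss_word w"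
  shows "wd_step\<^sup>*\<^sup>* w (map (flip_crossings L) w)"
  using assms(1)
proof (induction L rule: finite_induct)
  case empty
  then show ?case by (simp add: map_flip_crossings_id)
next
  case (insert c L)
  have "wd_step\<^sup>*\<^sup>* (map (flip_crossings L) w) (map (flip_crossings {c}) (map (flip_crossings L) w))"
    using wd_steps_flip_crossing[OF gauss_word_map_flip_crossings[OF gw]] .
  also have "map (flip_crossings {c}) (map (flip_crossings L) w) = map (flip_crossings (insert c L)) w"
    using insert.hyps(2) by (simp add: flip_crossings_insert)
  finally show ?case using insert.IH by (rule rtranclp_trans[rotated])
qed

lemma wd_steps_remove_innermost_chord:
  assumes gw: "gauss_word (u @ X # z @ Y # x)" and "lbl X = lbl Y" and "distinct (map lbl z)"
  shows "\<exists>w'. wd_step\<^sup>*\<^sup>* (u @ X # z @ Y # x) w' \<and> gauss_word w' \<and> length w' < length (u @ X # z @ Y # x)"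
    (is "\<exists>w'. wd_step\<^sup>*\<^sup>* ?w w' \<and> _ \<and> _")
proof -
  obtain c b s where X: "X = Ltr c b s" and Y: "Y = Ltr c (\<not> b) s"
    using gauss_word_chordE[OF assms(1,2)] .
  have "c \<notin> labels z" using gw gauss_word_chord_iff[of u c b s z x] X Y by simp
  then have "distinct (map lbl (X # z))" using assms(3) X by (simp add: labels_def)
  define F where "F = flip_crossings (lbl ` {l \<in> set (X # z). \<not> ovr l})"
  have over: "ovr (F X)" "\<forall>l\<in>set (map F z). ovr l"
    using ovr_flip_under_crossings[OF \<open>distinct (map lbl (X # z))\<close>] unfolding F_def by auto
  have "wd_step\<^sup>*\<^sup>* ?w (map F ?w)"
    unfolding F_def by (rule wd_steps_flip_crossings[OF _ gw]) simp
  then have flip: "wd_step\<^sup>*\<^sup>* ?w (map F u @ F X # map F z @ F Y # map F x)"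
    by simp
  have gw_flip: "gauss_word (map F u @ F X # map F z @ F Y # map F x)"
    using wd_steps_gauss_word[OF flip gw] .
  have slide: "wd_step\<^sup>*\<^sup>* (map F u @ F X # map F z @ F Y # map F x)
                                ((map F u @ map F z) @ F X # F Y # map F x)"
    using wd_steps_slide_over[OF gw_flip over] by simp
  have gw_slide: "gauss_word ((map F u @ map F z) @ F X # [] @ F Y # map F x)"
    using wd_steps_gauss_word[OF slide gw_flip] by simp
  have "lbl (F X) = lbl (F Y)" unfolding F_def using \<open>lbl X = lbl Y\<close> by simp
  then obtain c' b' s' where "F X = Ltr c' b' s'" and "F Y = Ltr c' (\<not> b') s'"
    using gauss_word_chordE[OF gw_slide] by blast
  with over(1) have kink: "F X = Ltr c' True s'" "F Y = Ltr c' False s'" by simp_all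
  define w' where "w' = map F u @ map F z @ map F x"
  have "gauss_word w'" "c' \<notin> labels w'"
    using gw_slide gauss_word_chord_iff[of "map F u @ map F z" c' True s' "[]" "map F x"]
    unfolding kink w'_def by simp_all
  then have "wd_step w' ((map F u @ map F z) @ F X # F Y # map F x)"
    using wd_step_r1[of "map F u @ map F z" "map F x" c' True s'] unfolding kink w'_def by simp
  then have "wd_step\<^sup>*\<^sup>* ?w w'"
    using flip slide by (meson rtranclp.rtrancl_into_rtrancl rtranclp_trans symp_wd_step sympD)
  moreover have "length w' < length ?w" unfolding w'_def by simp
  ultimately show ?thesis using \<open>gauss_word w'\<close> by blast
qed

theorem mainTheorem4:
  assumes "gauss_word w"
  shows "wd_step\<^sup>*\<^sup>* w []"
  using assms
proof (induction "length w" arbitrary: w rule: less_induct)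
  case less
  show ?case
  proof (cases "w = []")
    case False
    then obtain u X z Y x where w: "w = u @ X # z @ Y # x" "lbl X = lbl Y" "distinct (map lbl z)"
      using innermost_chord gauss_word_not_distinct_labels[OF less.prems] by blast
    then obtain w' where "wd_step\<^sup>*\<^sup>* w w'" "gauss_word w'" "length w' < length w"
      using wd_steps_remove_innermost_chord less.prems by blast
    with less.hyps show ?thesis by (meson rtranclp_trans)
  qed simp
qed

end
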